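(* Let $\Gamma$ be a connected $k$-regular highly-regular graph with CAM $C=[c_{i,j}]_{1\le i,j\le m}$ and diameter $D=\operatorname{diam}(\Gamma)\ge1$, with chosen partitions $V_1(u)=\{u\},\dots,V_m(u)$ for each vertex $u$. Let $S_0,\dots,S_D$ be nonempty subsets of $\{1,\dots,m\}$ such that $D_i(u)=\bigsqcup_{t\in S_i}V_t(u)$ for every vertex $u$ and every $i$ (such subsets always exist). For $i\in\{1,\dots,D\}$ define $b_{i-1}^{\max}=\max\{\sum_{t\in S_i}c_{t,l}: l\in S_{i-1}\}$ and $c_i^{\min}=\min\{\sum_{t\in S_{i-1}}c_{t,l}: l\in S_i\}$. Then (1) $k=b_0^{\max}\ge b_1^{\max}\ge\cdots\ge b_{D-1}^{\max}\ge1$; (2) $1=c_1^{\min}\le c_2^{\min}\le\cdots\le c_D^{\min}\le k$.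
   Context: All graphs are finite, simple; $d(u,v)$ is graph distance and $D_i(u)=\{v:d(u,v)=i\}$. A graph $\Gamma$ of order $n$ is highly-regular with collapsed adjacency matrix (CAM) $C=[c_{i,j}]_{1\le i,j\le m}$, where $2\le m<n$ (the value $m=n$ is allowed only when $n=2$), if for every vertex $u$ there is a partition of $V(\Gamma)$ into nonempty sets $V_1(u)=\{u\},V_2(u),\dots,V_m(u)$ such that for all $i,j$, every vertex $y\in V_j(u)$ is adjacent to exactly $c_{i,j}$ vertices of $V_i(u)$. *)

theory Defs
  imports Main
begin

definition simple_graph :: "'a set \<Rightarrow> ('a \<Rightarrow> 'a \<Rightarrow> bool) \<Rightarrow> bool" where
  "simple_graph V E \<longleftrightarrow> finite V \<and> (\<forall>x y. E x y \<longrightarrow> x \<in> V \<and> y \<in> V)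
     \<and> (\<forall>x y. E x y \<longrightarrow> E y x) \<and> (\<forall>x. \<not> E x x)"

definition edge_rel :: "('a \<Rightarrow> 'a \<Rightarrow> bool) \<Rightarrow> ('a \<times> 'a) set" where
  "edge_rel E = {(x, y). E x y}"

definition gdist :: "('a \<Rightarrow> 'a \<Rightarrow> bool) \<Rightarrow> 'a \<Rightarrow> 'a \<Rightarrow> nat" where
  "gdist E u v = (LEAST n. (u, v) \<in> edge_rel E ^^ n)"

definition connected_graph :: "'a set \<Rightarrow> ('a \<Rightarrow> 'a \<Rightarrow> bool) \<Rightarrow> bool" where
  "connected_graph V E \<longleftrightarrow> (\<forall>u\<in>V. \<forall>v\<in>V. \<exists>n. (u, v) \<in> edge_rel E ^^ n)"

definition diameter :: "'a set \<Rightarrow> ('a \<Rightarrow> 'a \<Rightarrow> bool) \<Rightarrow> nat" where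
  "diameter V E = Max {gdist E u v | u v. u \<in> V \<and> v \<in> V}"

definition dist_layer :: "'a set \<Rightarrow> ('a \<Rightarrow> 'a \<Rightarrow> bool) \<Rightarrow> nat \<Rightarrow> 'a \<Rightarrow> 'a set" where
  "dist_layer V E i u = {v \<in> V. gdist E u v = i}"

definition k_regular :: "'a set \<Rightarrow> ('a \<Rightarrow> 'a \<Rightarrow> bool) \<Rightarrow> nat \<Rightarrow> bool" where
  "k_regular V E k \<longleftrightarrow> (\<forall>v\<in>V. card {w \<in> V. E v w} = k)"

text \<open>P u i is V_i(u), i = 1..m, C i j is c_{i,j}.  P witnesses that the graph is
  highly-regular with CAM C (of size m).\<close>
definition highly_regular_partition ::
  "'a set \<Rightarrow> ('a \<Rightarrow> 'a \<Rightarrow> bool) \<Rightarrow> nat \<Rightarrow> (nat \<Rightarrow> nat \<Rightarrow> nat) \<Rightarrow> ('a \<Rightarrow> nat \<Rightarrow> 'a set) \<Rightarrow> bool" where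
  "highly_regular_partition V E m C P \<longleftrightarrow>
     (2 \<le> m \<and> (m < card V \<or> (m = card V \<and> card V = 2))) \<and>
     (\<forall>u\<in>V.
        P u 1 = {u} \<and>
        (\<forall>i\<in>{1..m}. P u i \<noteq> {} \<and> P u i \<subseteq> V) \<and>
        (\<forall>i\<in>{1..m}. \<forall>j\<in>{1..m}. i \<noteq> j \<longrightarrow> P u i \<inter> P u j = {}) \<and>
        (\<Union>i\<in>{1..m}. P u i) = V \<and>
        (\<forall>i\<in>{1..m}. \<forall>j\<in>{1..m}. \<forall>y\<in>P u j. card {x \<in> P u i. E x y} = C i j))"

definition highly_regular ::
  "'a set \<Rightarrow> ('a \<Rightarrow> 'a \<Rightarrow> bool) \<Rightarrow> nat \<Rightarrow> (nat \<Rightarrow> nat \<Rightarrow> nat) \<Rightarrow> bool" where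
  "highly_regular V E m C \<longleftrightarrow> (\<exists>P. highly_regular_partition V E m C P)"

end

theory Submission
  imports Defs
begin

text \<open>By the CAM, a vertex y of V_l(u) has exactly sum_{t in S_i} c_{t,l}
  neighbours in D_i(u); so the set of these neighbour counts, over y in D_j(u), is the same for
  every u, and b_i^max, c_i^min are its extrema. If d(u,y) = i+1 and u' is the neighbour of u on a
  geodesic to y, the triangle inequality gives N(y) \<inter> D_{i+2}(u) \<subseteq> N(y) \<inter> D_{i+1}(u') and
  N(y) \<inter> D_{i-1}(u') \<subseteq> N(y) \<inter> D_i(u). Applied to an extremal y, and using that the count sets at
  u and u' coincide, this yields both monotonicity claims.\<close>

lemma gdist_le_walk_length: "(u, v) \<in> edge_rel E ^^ n \<Longrightarrow> gdist E u v \<le> n"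
  unfolding gdist_def by (rule Least_le)

definition layer_degree :: "'a set \<Rightarrow> ('a \<Rightarrow> 'a \<Rightarrow> bool) \<Rightarrow> nat \<Rightarrow> 'a \<Rightarrow> 'a \<Rightarrow> nat" where
  "layer_degree V E i u y = card {x \<in> dist_layer V E i u. E x y}"

definition layer_degrees :: "'a set \<Rightarrow> ('a \<Rightarrow> 'a \<Rightarrow> bool) \<Rightarrow> nat \<Rightarrow> nat \<Rightarrow> 'a \<Rightarrow> nat set" where
  "layer_degrees V E i j u = layer_degree V E i u ` dist_layer V E j u"

locale connected_simple_graph =
  fixes V :: "'a set" and E :: "'a \<Rightarrow> 'a \<Rightarrow> bool"
  assumes simple: "simple_graph V E" and connected: "connected_graph V E"
begin

lemma finite_vertices: "finite V"
  using simple unfolding simple_graph_def by blast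

lemma adj_vertices: "E x y \<Longrightarrow> x \<in> V \<and> y \<in> V"
  using simple unfolding simple_graph_def by blast

lemma adj_sym: "E x y \<Longrightarrow> E y x"
  using simple unfolding simple_graph_def by blast

lemma adj_irrefl: "\<not> E x x"
  using simple unfolding simple_graph_def by blast

lemma gdist_walk: "u \<in> V \<Longrightarrow> v \<in> V \<Longrightarrow> (u, v) \<in> edge_rel E ^^ gdist E u v"
  using connected unfolding connected_graph_def gdist_def by (meson LeastI)

lemma gdist_adj_right:
  assumes "u \<in> V" "x \<in> V" "E x y"
  shows "gdist E u y \<le> gdist E u x + 1"
proof -
  have "(u, y) \<in> edge_rel E ^^ Suc (gdist E u x)"
    using relpow_Suc_I[OF gdist_walk[OF assms(1,2)]] assms(3) by (simp add: edge_rel_def)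
  then show ?thesis by (simp add: gdist_le_walk_length)
qed

lemma gdist_adj_left:
  assumes "x \<in> V" "y \<in> V" "E u x"
  shows "gdist E u y \<le> gdist E x y + 1"
proof -
  have "(u, y) \<in> edge_rel E ^^ Suc (gdist E x y)"
    using relpow_Suc_I2[OF _ gdist_walk[OF assms(1,2)]] assms(3) by (simp add: edge_rel_def)
  then show ?thesis by (simp add: gdist_le_walk_length)
qed

lemma gdist_Suc_first_step:
  assumes "u \<in> V" "y \<in> V" "gdist E u y = Suc n"
  obtains u' where "E u u'" "gdist E u' y = n"
proof -
  obtain u' where u': "(u, u') \<in> edge_rel E" "(u', y) \<in> edge_rel E ^^ n"
    using gdist_walk[OF assms(1,2)] assms(3) by (metis relpow_Suc_D2)
  then have "E u u'" by (simp add: edge_rel_def)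
  moreover have "gdist E u' y \<le> n" using gdist_le_walk_length u'(2) .
  moreover have "gdist E u y \<le> gdist E u' y + 1"
    using gdist_adj_left adj_vertices \<open>E u u'\<close> assms(2) by blast
  ultimately show ?thesis using that assms(3) by simp
qed

lemma gdist_Suc_last_step:
  assumes "u \<in> V" "y \<in> V" "gdist E u y = Suc n"
  obtains w where "E w y" "gdist E u w = n"
proof -
  obtain w where w: "(u, w) \<in> edge_rel E ^^ n" "(w, y) \<in> edge_rel E"
    using gdist_walk[OF assms(1,2)] assms(3) by (metis relpow_Suc_E)
  then have "E w y" by (simp add: edge_rel_def)
  moreover have "gdist E u w \<le> n" using gdist_le_walk_length w(1) .
  moreover have "gdist E u y \<le> gdist E u w + 1"
    using gdist_adj_right adj_vertices \<open>E w y\<close> assms(1) by blast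
  ultimately show ?thesis using that assms(3) by simp
qed

lemma dist_layer_0: "u \<in> V \<Longrightarrow> dist_layer V E 0 u = {u}"
  using gdist_walk gdist_le_walk_length[of u u 0 E] by (fastforce simp: dist_layer_def)

lemma dist_layer_1:
  assumes u: "u \<in> V"
  shows "dist_layer V E 1 u = {v. E u v}"
proof (intro set_eqI iffI)
  fix v assume "v \<in> dist_layer V E 1 u"
  then show "v \<in> {v. E u v}"
    using gdist_walk[OF u, of v] by (simp add: dist_layer_def edge_rel_def)
next
  fix v assume "v \<in> {v. E u v}"
  then have uv: "E u v" "v \<in> V" using adj_vertices by auto
  then have "gdist E u v \<le> 1"
    using gdist_le_walk_length[of u v 1] by (simp add: edge_rel_def)
  moreover have "v \<notin> dist_layer V E 0 u"
    using dist_layer_0[OF u] adj_irrefl uv(1) by auto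
  ultimately show "v \<in> dist_layer V E 1 u" using uv by (simp add: dist_layer_def)
qed

lemma dist_layer_nonempty:
  assumes "u \<in> V" "v \<in> V" "j \<le> gdist E u v"
  shows "dist_layer V E j u \<noteq> {}"
  using assms(2,3)
proof (induction "gdist E u v" arbitrary: v)
  case 0
  then show ?case using assms(1) dist_layer_0 by simp
next
  case (Suc n)
  show ?case
  proof (cases "j = Suc n")
    case True
    then show ?thesis using Suc by (auto simp: dist_layer_def)
  next
    case False
    obtain w where "E w v" "gdist E u w = n"
      using gdist_Suc_last_step[OF assms(1) Suc.prems(1) Suc.hyps(2)[symmetric]] .
    then show ?thesis using Suc False adj_vertices by force
  qed
qed

lemma diameter_attained:
  assumes "V \<noteq> {}"
  obtains u v where "u \<in> V" "v \<in> V" "gdist E u v = diameter V E"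
proof -
  let ?X = "{gdist E u v | u v. u \<in> V \<and> v \<in> V}"
  have "?X = (\<lambda>(u, v). gdist E u v) ` (V \<times> V)" by auto
  then have "finite ?X" using finite_vertices by simp
  moreover have "?X \<noteq> {}" using assms by auto
  ultimately have "Max ?X \<in> ?X" by (rule Max_in)
  then show ?thesis using that unfolding diameter_def by auto
qed

lemma layer_degree_le_degree: "layer_degree V E i u y \<le> card {w \<in> V. E y w}"
  unfolding layer_degree_def
  by (rule card_mono) (use finite_vertices adj_sym in \<open>auto simp: dist_layer_def\<close>)

lemma layer_degree_shift_up:
  assumes "E u u'" "y \<in> V" "gdist E u' y = i"
  shows "layer_degree V E (i + 2) u y \<le> layer_degree V E (i + 1) u' y"
  unfolding layer_degree_def
proof (rule card_mono)
  show "finite {x \<in> dist_layer V E (i + 1) u'. E x y}"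
    using finite_vertices by (simp add: dist_layer_def)
  have "gdist E u' x = i + 1" if "x \<in> V" "gdist E u x = i + 2" "E x y" for x
  proof -
    have "gdist E u' x \<le> gdist E u' y + 1"
      using gdist_adj_right adj_vertices adj_sym assms(1,2) that(3) by blast
    moreover have "gdist E u x \<le> gdist E u' x + 1"
      using gdist_adj_left adj_vertices assms(1) that(1) by blast
    ultimately show ?thesis using assms(3) that(2) by linarith
  qed
  then show "{x \<in> dist_layer V E (i + 2) u. E x y} \<subseteq> {x \<in> dist_layer V E (i + 1) u'. E x y}"
    by (auto simp: dist_layer_def)
qed

lemma layer_degree_shift_down:
  assumes "u \<in> V" "E u u'" "gdist E u y = i + 1" "1 \<le> i"
  shows "layer_degree V E (i - 1) u' y \<le> layer_degree V E i u y"
  unfolding layer_degree_def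
proof (rule card_mono)
  show "finite {x \<in> dist_layer V E i u. E x y}"
    using finite_vertices by (simp add: dist_layer_def)
  have "gdist E u x = i" if "x \<in> V" "gdist E u' x = i - 1" "E x y" for x
  proof -
    have "gdist E u y \<le> gdist E u x + 1"
      using gdist_adj_right assms(1) that(1,3) by blast
    moreover have "gdist E u x \<le> gdist E u' x + 1"
      using gdist_adj_left adj_vertices assms(2) that(1) by blast
    ultimately show ?thesis using assms(3,4) that(2) by linarith
  qed
  then show "{x \<in> dist_layer V E (i - 1) u'. E x y} \<subseteq> {x \<in> dist_layer V E i u. E x y}"
    by (auto simp: dist_layer_def)
qed

end

locale layer_invariant_graph = connected_simple_graph +
  fixes k D :: nat and L :: "nat \<Rightarrow> nat \<Rightarrow> nat set"
  assumes regular: "k_regular V E k"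
    and vertices_nonempty: "V \<noteq> {}"
    and D_eq_diameter: "D = diameter V E" and diameter_pos: "1 \<le> D"
    and layer_degrees_invariant:
      "\<And>u i j. u \<in> V \<Longrightarrow> i \<le> D \<Longrightarrow> j \<le> D \<Longrightarrow> layer_degrees V E i j u = L i j"
begin

lemma L_finite:
  assumes "i \<le> D" "j \<le> D"
  shows "finite (L i j)"
proof -
  obtain u where "u \<in> V" using vertices_nonempty by blast
  then have "L i j = layer_degrees V E i j u" using layer_degrees_invariant assms by simp
  then show ?thesis using finite_vertices by (simp add: layer_degrees_def dist_layer_def)
qed

lemma L_nonempty:
  assumes "i \<le> D" "j \<le> D"
  shows "L i j \<noteq> {}"
proof -
  obtain u v where uv: "u \<in> V" "v \<in> V" "gdist E u v = D"
    using diameter_attained[OF vertices_nonempty] D_eq_diameter by metis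
  then have "dist_layer V E j u \<noteq> {}"
    using dist_layer_nonempty assms(2) by simp
  then show ?thesis
    using layer_degrees_invariant[OF uv(1) assms] unfolding layer_degrees_def by blast
qed

lemma L_1_0: "L 1 0 = {k}"
proof -
  obtain u where u: "u \<in> V" using vertices_nonempty by blast
  have "{x \<in> dist_layer V E 1 u. E x u} = {w \<in> V. E u w}"
    using dist_layer_1[OF u] adj_sym adj_vertices by auto
  then have "layer_degree V E 1 u u = k"
    using regular u by (simp add: layer_degree_def k_regular_def)
  then show ?thesis
    using layer_degrees_invariant[OF u, of 1 0] diameter_pos u
    by (simp add: layer_degrees_def dist_layer_0)
qed

lemma L_0_1: "L 0 1 = {1}"
proof -
  obtain u where u: "u \<in> V" using vertices_nonempty by blast
  have "layer_degree V E 0 u v = 1" if "E u v" for v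
  proof -
    have "{x \<in> dist_layer V E 0 u. E x v} = {u}" using that dist_layer_0[OF u] by auto
    then show ?thesis by (simp add: layer_degree_def)
  qed
  moreover have "L 0 1 = layer_degree V E 0 u ` {v. E u v}"
    using layer_degrees_invariant[OF u, of 0 1] diameter_pos
    unfolding layer_degrees_def dist_layer_1[OF u] by simp
  ultimately have "L 0 1 \<subseteq> {1}" by auto
  then show ?thesis using L_nonempty[of 0 1] diameter_pos by blast
qed

lemma Max_L_Suc_le:
  assumes "i + 1 < D"
  shows "Max (L (i + 2) (i + 1)) \<le> Max (L (i + 1) i)"
proof -
  obtain u where u: "u \<in> V" using vertices_nonempty by blast
  have "Max (L (i + 2) (i + 1)) \<in> layer_degrees V E (i + 2) (i + 1) u"
    using Max_in[OF L_finite L_nonempty] layer_degrees_invariant[OF u] assms by simp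
  then obtain y where y: "y \<in> V" "gdist E u y = Suc i"
    and max: "Max (L (i + 2) (i + 1)) = layer_degree V E (i + 2) u y"
    by (auto simp: layer_degrees_def dist_layer_def)
  obtain u' where u': "E u u'" "gdist E u' y = i"
    using gdist_Suc_first_step[OF u y] .
  have "layer_degree V E (i + 1) u' y \<in> layer_degrees V E (i + 1) i u'"
    using y(1) u'(2) by (simp add: layer_degrees_def dist_layer_def)
  then have "layer_degree V E (i + 1) u' y \<in> L (i + 1) i"
    using layer_degrees_invariant adj_vertices[OF u'(1)] assms by simp
  then have "layer_degree V E (i + 1) u' y \<le> Max (L (i + 1) i)"
    using L_finite assms by simp
  then show ?thesis using max layer_degree_shift_up[OF u'(1) y(1) u'(2)] by simp
qed

lemma Max_L_last_pos: "1 \<le> Max (L D (D - 1))"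
proof -
  obtain u v where uv: "u \<in> V" "v \<in> V" "gdist E u v = D"
    using diameter_attained[OF vertices_nonempty] D_eq_diameter by metis
  then have "gdist E u v = Suc (D - 1)" using diameter_pos by simp
  then obtain w where w: "E w v" "gdist E u w = D - 1"
    using gdist_Suc_last_step[OF uv(1,2)] by blast
  have "v \<in> {x \<in> dist_layer V E D u. E x w}"
    using uv w(1) adj_sym by (simp add: dist_layer_def)
  moreover have "finite {x \<in> dist_layer V E D u. E x w}"
    using finite_vertices by (simp add: dist_layer_def)
  ultimately have "0 < layer_degree V E D u w"
    unfolding layer_degree_def using card_gt_0_iff by blast
  also have "layer_degree V E D u w \<le> Max (L D (D - 1))"
  proof (rule Max_ge[OF L_finite])
    have "layer_degree V E D u w \<in> layer_degrees V E D (D - 1) u"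
      using w adj_vertices by (simp add: layer_degrees_def dist_layer_def)
    then show "layer_degree V E D u w \<in> L D (D - 1)"
      using layer_degrees_invariant[OF uv(1)] by simp
  qed simp_all
  finally show ?thesis by simp
qed

lemma Min_L_le_Suc:
  assumes "1 \<le> i" "i < D"
  shows "Min (L (i - 1) i) \<le> Min (L i (i + 1))"
proof -
  obtain u where u: "u \<in> V" using vertices_nonempty by blast
  have "Min (L i (i + 1)) \<in> layer_degrees V E i (i + 1) u"
    using Min_in[OF L_finite L_nonempty] layer_degrees_invariant[OF u] assms by simp
  then obtain y where y: "y \<in> V" "gdist E u y = Suc i"
    and min: "Min (L i (i + 1)) = layer_degree V E i u y"
    by (auto simp: layer_degrees_def dist_layer_def)
  obtain u' where u': "E u u'" "gdist E u' y = i"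
    using gdist_Suc_first_step[OF u y] .
  have "layer_degree V E (i - 1) u' y \<in> layer_degrees V E (i - 1) i u'"
    using y(1) u'(2) by (simp add: layer_degrees_def dist_layer_def)
  then have "layer_degree V E (i - 1) u' y \<in> L (i - 1) i"
    using layer_degrees_invariant adj_vertices[OF u'(1)] assms by simp
  then have "Min (L (i - 1) i) \<le> layer_degree V E (i - 1) u' y"
    using L_finite assms by simp
  moreover have "layer_degree V E (i - 1) u' y \<le> layer_degree V E i u y"
    using layer_degree_shift_down[OF u u'(1) _ assms(1)] y(2) by simp
  ultimately show ?thesis using min by simp
qed

lemma Min_L_last_le: "Min (L (D - 1) D) \<le> k"
proof -
  obtain u where u: "u \<in> V" using vertices_nonempty by blast
  have "Min (L (D - 1) D) \<in> layer_degrees V E (D - 1) D u"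
    using Min_in[OF L_finite L_nonempty] layer_degrees_invariant[OF u] by simp
  then obtain y where "y \<in> V" "Min (L (D - 1) D) = layer_degree V E (D - 1) u y"
    by (auto simp: layer_degrees_def dist_layer_def)
  then show ?thesis using layer_degree_le_degree[of "D - 1" u y] regular by (simp add: k_regular_def)
qed

end

lemma highly_regular_partition_finite:
  assumes "highly_regular_partition V E m C P"
  shows "finite V"
proof -
  have "2 \<le> card V" using assms unfolding highly_regular_partition_def by linarith
  then show ?thesis using card.infinite by fastforce
qed

lemma highly_regular_partition_cells:
  assumes "highly_regular_partition V E m C P" "u \<in> V"
  shows "\<forall>i\<in>{1..m}. P u i \<noteq> {} \<and> P u i \<subseteq> V"
    and "\<forall>i\<in>{1..m}. \<forall>j\<in>{1..m}. i \<noteq> j \<longrightarrow> P u i \<inter> P u j = {}"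
    and "\<forall>i\<in>{1..m}. \<forall>j\<in>{1..m}. \<forall>y\<in>P u j. card {x \<in> P u i. E x y} = C i j"
  using assms(1)[unfolded highly_regular_partition_def, THEN conjunct2, rule_format, OF assms(2)]
  by simp_all

lemma card_adj_in_cells:
  assumes hrp: "highly_regular_partition V E m C P"
    and u: "u \<in> V" and T: "T \<subseteq> {1..m}" and l: "l \<in> {1..m}" "y \<in> P u l"
  shows "card {x \<in> (\<Union>t\<in>T. P u t). E x y} = (\<Sum>t\<in>T. C t l)"
proof -
  note cells = highly_regular_partition_cells[OF hrp u]
  have "finite T" using T finite_subset by blast
  have finite_cells: "finite {x \<in> P u t. E x y}" if "t \<in> T" for t
  proof -
    have "P u t \<subseteq> V" using cells(1) T that by blast
    then have "finite (P u t)" using highly_regular_partition_finite[OF hrp] finite_subset by blast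
    then show ?thesis by simp
  qed
  have disjoint: "{x \<in> P u t. E x y} \<inter> {x \<in> P u t'. E x y} = {}"
    if "t \<in> T" "t' \<in> T" "t \<noteq> t'" for t t'
    using cells(2) T that by blast
  have "{x \<in> (\<Union>t\<in>T. P u t). E x y} = (\<Union>t\<in>T. {x \<in> P u t. E x y})" by blast
  also have "card \<dots> = (\<Sum>t\<in>T. card {x \<in> P u t. E x y})"
    using \<open>finite T\<close> finite_cells disjoint by (intro card_UN_disjoint) auto
  also have "\<dots> = (\<Sum>t\<in>T. C t l)"
    using cells(3) T l by (intro sum.cong) auto
  finally show ?thesis .
qed

lemma layer_degrees_eq_CAM_sums:
  assumes hrp: "highly_regular_partition V E m C P" and u: "u \<in> V"
    and "S i \<subseteq> {1..m}" "S j \<subseteq> {1..m}"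
    and layer_i: "dist_layer V E i u = (\<Union>t\<in>S i. P u t)"
    and layer_j: "dist_layer V E j u = (\<Union>t\<in>S j. P u t)"
  shows "layer_degrees V E i j u = {\<Sum>t\<in>S i. C t l | l. l \<in> S j}"
proof -
  have degree: "layer_degree V E i u y = (\<Sum>t\<in>S i. C t l)" if "l \<in> S j" "y \<in> P u l" for l y
    unfolding layer_degree_def layer_i
    using card_adj_in_cells[OF hrp u \<open>S i \<subseteq> {1..m}\<close>] assms(4) that by blast
  show ?thesis
    unfolding layer_degrees_def layer_j
  proof (intro equalityI subsetI)
    fix a assume "a \<in> layer_degree V E i u ` (\<Union>t\<in>S j. P u t)"
    then show "a \<in> {\<Sum>t\<in>S i. C t l | l. l \<in> S j}" using degree by fastforce
  next
    fix a assume "a \<in> {\<Sum>t\<in>S i. C t l | l. l \<in> S j}"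
    then obtain l where l: "l \<in> S j" "a = (\<Sum>t\<in>S i. C t l)" by blast
    moreover obtain y where "y \<in> P u l"
      using highly_regular_partition_cells(1)[OF hrp u] assms(4) l(1) by blast
    ultimately show "a \<in> layer_degree V E i u ` (\<Union>t\<in>S j. P u t)"
      using degree by (metis UN_iff image_eqI)
  qed
qed

theorem proposition6p1:
  fixes V :: "'a set" and E :: "'a \<Rightarrow> 'a \<Rightarrow> bool" and k m :: nat
    and C :: "nat \<Rightarrow> nat \<Rightarrow> nat" and P :: "'a \<Rightarrow> nat \<Rightarrow> 'a set"
    and S :: "nat \<Rightarrow> nat set" and D :: nat
  assumes "simple_graph V E"
    and "connected_graph V E"
    and "k_regular V E k"
    and "highly_regular_partition V E m C P"
    and D_def: "D = diameter V E"
    and "D \<ge> 1"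
    and "\<forall>i\<le>D. S i \<noteq> {} \<and> S i \<subseteq> {1..m}"
    and "\<forall>u\<in>V. \<forall>i\<le>D. dist_layer V E i u = (\<Union>t\<in>S i. P u t)"
  shows "let bmax = (\<lambda>i. Max {\<Sum>t\<in>S (i+1). C t l | l. l \<in> S i});
             cmin = (\<lambda>i. Min {\<Sum>t\<in>S (i-1). C t l | l. l \<in> S i})
         in (k = bmax 0 \<and> (\<forall>i. i + 1 < D \<longrightarrow> bmax (i+1) \<le> bmax i) \<and> bmax (D-1) \<ge> 1)
          \<and> (cmin 1 = 1 \<and> (\<forall>i. 1 \<le> i \<and> i < D \<longrightarrow> cmin i \<le> cmin (i+1)) \<and> cmin D \<le> k)"
proof -
  define L where "L i j = {\<Sum>t\<in>S i. C t l | l. l \<in> S j}" for i j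
  have "V \<noteq> {}"
    using assms(4) unfolding highly_regular_partition_def by auto
  interpret layer_invariant_graph V E k D L
    using assms \<open>V \<noteq> {}\<close> layer_degrees_eq_CAM_sums[OF assms(4)]
    by unfold_locales (simp_all add: L_def)
  show ?thesis
    unfolding Let_def L_def[symmetric]
    using L_1_0 Max_L_Suc_le Max_L_last_pos L_0_1 Min_L_le_Suc Min_L_last_le diameter_pos
    by (simp add: numeral_2_eq_2)
qed

end
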